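(* For $0<x<\frac12$, $$\prod_{k=0}^{\infty}\left(1+x^{2^k}+(2x)^{2^k}\right)=\sum_{n=0}^{\infty}c(n)x^n .$$
   Context: For $n\ge 0$, $c(n)=\sum_{i=0}^{n}\left(\binom{n}{i}\bmod 2\right)2^{i}$, the integer whose binary digits form the $n$-th row of Pascal's triangle modulo $2$ (so $c(0),c(1),\dots=1,3,5,15,17,51,\dots$). *)

theory Defs
  imports "HOL-Analysis.Analysis"
begin

definition c :: "nat \<Rightarrow> nat" where
  "c n = (\<Sum>i = 0..n. ((n choose i) mod 2) * 2 ^ i)"

end

theory Submission
  imports Defs
begin

text \<open>Parity of binomial coefficients (Lucas' theorem for p = 2) gives the recursions
  P(2m, y) = P(m, y^2) and P(2m+1, y) = (1 + y) P(m, y^2) for the generating polynomial P(n, y)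
  of row n of Pascal's triangle mod 2. Splitting sum_n P(n, y) x^n by the parity of n therefore
  turns the partial sum up to 2^K into the partial product of (1 + x^(2^k) + (yx)^(2^k)), k < K.
  As c(n) = P(n, 2) < 2^(n+1), the series converges for 0 < x < 1/2, and its partial sums along
  n = 2^K are the partial products.\<close>

lemma even_binomial_double:
  "even (2 * m choose Suc (2 * j)) \<and> (even (2 * m choose (2 * j)) \<longleftrightarrow> even (m choose j))"
proof (induction m arbitrary: j)
  case 0
  then show ?case by (cases j) auto
next
  case (Suc m)
  show ?case
  proof (cases j)
    case 0
    then show ?thesis by simp
  next
    case (Suc i)
    have "(2 * Suc m choose Suc (2 * j))
        = (2 * m choose Suc (2 * i)) + 2 * (2 * m choose (2 * j)) + (2 * m choose Suc (2 * j))"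
      "(2 * Suc m choose (2 * j))
        = (2 * m choose (2 * i)) + 2 * (2 * m choose Suc (2 * i)) + (2 * m choose (2 * j))"
      using Suc by simp_all
    then show ?thesis
      using Suc.IH[of i] Suc.IH[of j] Suc by simp
  qed
qed

lemma even_binomial_Suc_double:
  "(even (Suc (2 * m) choose (2 * j)) \<longleftrightarrow> even (m choose j))
   \<and> (even (Suc (2 * m) choose Suc (2 * j)) \<longleftrightarrow> even (m choose j))"
  using even_binomial_double[of m j] even_binomial_double[of m "j - 1"]
  by (cases j) simp_all

definition pascal_mod_2_poly :: "nat \<Rightarrow> 'a::comm_semiring_1 \<Rightarrow> 'a" where
  "pascal_mod_2_poly n y = (\<Sum>i\<le>n. of_nat ((n choose i) mod 2) * y ^ i)"

lemma pascal_mod_2_poly_eq_sum_lessThan: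
  assumes "n < N"
  shows "pascal_mod_2_poly n y = (\<Sum>i<N. of_nat ((n choose i) mod 2) * y ^ i)"
  unfolding pascal_mod_2_poly_def
  by (rule sum.mono_neutral_left) (use assms in \<open>auto simp: binomial_eq_0\<close>)

lemma sum_lessThan_double:
  fixes f :: "nat \<Rightarrow> 'a::comm_monoid_add"
  shows "(\<Sum>i<2 * n. f i) = (\<Sum>j<n. f (2 * j) + f (Suc (2 * j)))"
  by (induction n) (simp_all add: ac_simps)

lemma pascal_mod_2_poly_double:
  "pascal_mod_2_poly (2 * m) y = pascal_mod_2_poly m (y\<^sup>2)"
proof -
  have "pascal_mod_2_poly (2 * m) y = (\<Sum>i<2 * Suc m. of_nat ((2 * m choose i) mod 2) * y ^ i)"
    by (rule pascal_mod_2_poly_eq_sum_lessThan) simp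
  also have "\<dots> = (\<Sum>j<Suc m. of_nat ((m choose j) mod 2) * (y\<^sup>2) ^ j)"
    unfolding sum_lessThan_double by (simp add: mod_2_eq_odd even_binomial_double power_mult)
  finally show ?thesis
    by (simp add: pascal_mod_2_poly_def lessThan_Suc_atMost)
qed

lemma pascal_mod_2_poly_Suc_double:
  "pascal_mod_2_poly (Suc (2 * m)) y = (1 + y) * pascal_mod_2_poly m (y\<^sup>2)"
proof -
  have "pascal_mod_2_poly (Suc (2 * m)) y
      = (\<Sum>i<2 * Suc m. of_nat ((Suc (2 * m) choose i) mod 2) * y ^ i)"
    by (rule pascal_mod_2_poly_eq_sum_lessThan) simp
  also have "\<dots> = (\<Sum>j<Suc m. (1 + y) * (of_nat ((m choose j) mod 2) * (y\<^sup>2) ^ j))"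
    unfolding sum_lessThan_double
    by (simp only: mod_2_eq_odd even_binomial_Suc_double) (simp add: power_mult[symmetric] algebra_simps)
  also have "\<dots> = (1 + y) * pascal_mod_2_poly m (y\<^sup>2)"
    by (simp add: pascal_mod_2_poly_def sum_distrib_left lessThan_Suc_atMost)
  finally show ?thesis .
qed

lemma sum_pascal_mod_2_poly_power_of_2:
  fixes x y :: "'a::comm_semiring_1"
  shows "(\<Sum>n<2 ^ K. pascal_mod_2_poly n y * x ^ n) = (\<Prod>k<K. 1 + x ^ 2 ^ k + (y * x) ^ 2 ^ k)"
proof (induction K arbitrary: x y)
  case 0
  then show ?case by (simp add: pascal_mod_2_poly_def)
next
  case (Suc K)
  have "(\<Sum>n<2 ^ Suc K. pascal_mod_2_poly n y * x ^ n)
      = (\<Sum>m<2 ^ K. (1 + x + y * x) * (pascal_mod_2_poly m (y\<^sup>2) * (x\<^sup>2) ^ m))"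
    unfolding power_Suc sum_lessThan_double pascal_mod_2_poly_double pascal_mod_2_poly_Suc_double
    by (simp add: power_mult[symmetric] algebra_simps)
  also have "\<dots> = (1 + x + y * x) * (\<Prod>k<K. 1 + (x\<^sup>2) ^ 2 ^ k + (y\<^sup>2 * x\<^sup>2) ^ 2 ^ k)"
    by (simp add: sum_distrib_left[symmetric] Suc.IH)
  also have "\<dots> = (\<Prod>k<Suc K. 1 + x ^ 2 ^ k + (y * x) ^ 2 ^ k)"
    unfolding prod.lessThan_Suc_shift
    by (simp add: power_mult[symmetric] power_mult_distrib[symmetric] mult.commute)
  finally show ?case .
qed
lemma c_eq_pascal_mod_2_poly: "of_nat (c n) = pascal_mod_2_poly n (2::'a::comm_semiring_1)"
  by (simp add: c_def pascal_mod_2_poly_def atLeast0AtMost)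

lemma c_less: "c n < 2 ^ Suc n"
proof -
  have "c n \<le> (\<Sum>i<Suc n. 2 ^ i)"
    unfolding c_def atLeast0AtMost lessThan_Suc_atMost[symmetric] by (rule sum_mono) simp
  also have "\<dots> < 2 ^ Suc n"
    by (induction n) simp_all
  finally show ?thesis .
qed

theorem corollary1:
  fixes x :: real
  assumes "0 < x" and "x < 1/2"
  shows "summable (\<lambda>n. real (c n) * x ^ n)
     \<and> (\<lambda>k. 1 + x ^ (2 ^ k) + (2 * x) ^ (2 ^ k)) has_prod (\<Sum>n. real (c n) * x ^ n)"
proof -
  let ?a = "\<lambda>n. real (c n) * x ^ n"
  have "summable (\<lambda>n. 2 * (2 * x) ^ n)"
    using assms by (intro summable_mult summable_geometric) simp
  moreover have "norm (?a n) \<le> 2 * (2 * x) ^ n" for n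
    using c_less[of n] assms
    by (simp add: power_mult_distrib mult_right_mono flip: of_nat_less_iff[where 'a=real])
  ultimately have summable: "summable ?a"
    by (rule summable_comparison_test')
  have "(\<lambda>K. \<Sum>n<2 ^ Suc K. ?a n) \<longlonglongrightarrow> (\<Sum>n. ?a n)"
    using LIMSEQ_subseq_LIMSEQ[OF summable_LIMSEQ[OF summable], of "\<lambda>K. 2 ^ Suc K"]
    by (simp add: strict_mono_def o_def)
  moreover have "(\<Sum>n<2 ^ Suc K. ?a n) = (\<Prod>k\<le>K. 1 + x ^ 2 ^ k + (2 * x) ^ 2 ^ k)" for K
    using sum_pascal_mod_2_poly_power_of_2[where K = "Suc K" and y = 2 and x = x]
    by (simp add: c_eq_pascal_mod_2_poly lessThan_Suc_atMost)
  moreover have "(\<Sum>n<1. ?a n) \<le> (\<Sum>n. ?a n)"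
    by (rule sum_le_suminf[OF summable]) (use assms in auto)
  then have "(\<Sum>n. ?a n) \<noteq> 0"
    by (simp add: c_def)
  ultimately show ?thesis
    using summable by (auto simp: has_prod_def raw_has_prod_def)
qed

end
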